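(* Let $q(n)$ denote the number of partitions of $n$ into distinct parts, with $q(0)=1$ and $q(n)=0$ for $n<0$, and define $s(n)=q(n)-2q(n-1)+q(n-2)$. Then for every integer $n\ge 6$, $s(n)$ equals the number of partitions of $n$ with parts $q_1\ge q_2\ge\dots\ge q_h$ such that $h\ge 3$, $q_j-q_{j+1}\in\{0,1\}$ for all $1\le j<h$, $q_1=q_2$, and the two smallest parts are both equal to $3$: $q_{h-1}=q_h=3$.
   Context: $q(n)$ counts strict partitions (partitions into distinct parts) of $n$. *)

theory Defs
  imports Main
begin

definition partitions :: "nat \<Rightarrow> nat list set" where
  "partitions n = {xs. sorted_wrt (\<ge>) xs \<and> (\<forall>x\<in>set xs. 0 < x) \<and> sum_list xs = n}"

definition q :: "int \<Rightarrow> int" where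
  "q n = (if n < 0 then 0
          else int (card {xs \<in> partitions (nat n). distinct xs}))"

definition s :: "int \<Rightarrow> int" where
  "s n = q n - 2 * q (n - 1) + q (n - 2)"

end

(*
  Read a partition with its smallest part first, and call a list gapless if consecutive
  entries differ by 0 or 1. Reversed, the partitions counted on the right are the lists
  3 # zs with zs gapless, starting at 3 and ending in two equal entries; let R(N) count such
  zs of sum N, and let A_a(N) count the gapless lists of sum N starting at a.

  Conjugation turns strict partitions of n into gapless lists starting at 1, so q(n) = A_1(n)
  for n > 0. Removing the first entry gives A_a(N) = [N = a] + A_a(N - a) + A_(a+1)(N - a).
  Raising the last entry by one maps the lists ending in two equal entries bijectively onto
  those ending in two different entries, so A_3(N + 1) = [N + 1 = 3] + R(N + 1) + R(N).
  Hence s(n) = A_2(n - 1) - A_2(n - 2), and then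
  s(n + 2) - R(n - 1) = s(n) - R(n - 3) + [n = 4] - [n = 5]. Since s(4) - R(1) = -1 and
  s(5) - R(2) = 1, the difference s(n) - R(n - 3) vanishes for all n >= 6.
*)

theory Submission
  imports Defs
begin

lemma length_le_sum_list_pos: "(\<forall>x\<in>set xs. (0::nat) < x) \<Longrightarrow> length xs \<le> sum_list xs"
  by (induction xs) auto

lemma finite_pos_lists_sum: "finite {xs :: nat list. (\<forall>x\<in>set xs. 0 < x) \<and> sum_list xs = N}"
proof (rule finite_subset)
  show "{xs. (\<forall>x\<in>set xs. 0 < x) \<and> sum_list xs = N} \<subseteq> {xs. set xs \<subseteq> {..N} \<and> length xs \<le> N}"
    using member_le_sum_list length_le_sum_list_pos by fastforce
  show "finite {xs :: nat list. set xs \<subseteq> {..N} \<and> length xs \<le> N}"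
    by (rule finite_lists_length_le) simp
qed

lemma card_image_Un_image:
  assumes "finite A" "finite B" "inj_on f A" "inj_on g B" "f ` A \<inter> g ` B = {}"
  shows "card (f ` A \<union> g ` B) = card A + card B"
  using assms by (simp add: card_Un_disjoint card_image)

lemma card_eq_sum_card_fibres:
  assumes "finite S" "finite T" "g ` S \<subseteq> T"
  shows "card S = (\<Sum>y\<in>T. card {x \<in> S. g x = y})"
  using sum.group[OF assms, of "\<lambda>_. 1 :: nat"] by simp

abbreviation gapless :: "nat list \<Rightarrow> bool" where
  "gapless \<equiv> successively (\<lambda>x y. y = x \<or> y = Suc x)"

lemma sorted_if_gapless: "gapless ys \<Longrightarrow> sorted ys"
  by (metis (mono_tags, lifting) le_Suc_eq order.refl successively_conv_sorted_wrt
        successively_mono transp_on_le)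

lemma gapless_hd_le: "gapless ys \<Longrightarrow> z \<in> set ys \<Longrightarrow> hd ys \<le> z"
  by (cases ys) (auto dest: sorted_if_gapless)

lemma gapless_map_Suc: "gapless (map Suc zs) \<longleftrightarrow> gapless zs"
  by (simp add: successively_map)

lemma gapless_append_pair: "gapless (ws @ [x, y]) \<longleftrightarrow> gapless (ws @ [x]) \<and> (y = x \<or> y = Suc x)"
  using successively_append_iff[of _ "ws @ [x]" "[y]"] by simp

lemma gapless_rev_iff:
  "gapless (rev xs) \<longleftrightarrow>
     sorted_wrt (\<ge>) xs \<and> (\<forall>j. j + 1 < length xs \<longrightarrow> xs ! j - xs ! (j + 1) \<in> {0, 1})"
proof -
  have "gapless (rev xs) \<longleftrightarrow>
      (\<forall>j. Suc j < length xs \<longrightarrow> xs ! j = xs ! Suc j \<or> xs ! j = Suc (xs ! Suc j))"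
    by (simp only: successively_rev) (simp add: successively_conv_nth)
  moreover have "sorted_wrt (\<ge>) xs \<longleftrightarrow> (\<forall>j. Suc j < length xs \<longrightarrow> xs ! Suc j \<le> xs ! j)"
    by (simp add: sorted_wrt_iff_nth_Suc_transp)
  moreover have "(a = b \<or> a = Suc b) \<longleftrightarrow> b \<le> a \<and> a - b \<in> {0, 1}" for a b :: nat
    by auto
  ultimately show ?thesis
    by (auto simp del: insert_iff)
qed

definition gapless_lists :: "nat \<Rightarrow> nat \<Rightarrow> nat list set" where
  "gapless_lists a N = {ys. ys \<noteq> [] \<and> hd ys = a \<and> gapless ys \<and> sum_list ys = N}"

lemma gapless_lists_subset_pos:
  "0 < a \<Longrightarrow> gapless_lists a N \<subseteq> {xs. (\<forall>x\<in>set xs. 0 < x) \<and> sum_list xs = N}"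
  unfolding gapless_lists_def by (auto dest: gapless_hd_le)

lemma finite_gapless_lists: "0 < a \<Longrightarrow> finite (gapless_lists a N)"
  using finite_subset[OF gapless_lists_subset_pos finite_pos_lists_sum] .

lemma gapless_lists_empty: "N < a \<Longrightarrow> gapless_lists a N = {}"
  unfolding gapless_lists_def using member_le_sum_list[OF hd_in_set] by fastforce

lemma gapless_lists_Cons:
  assumes "a \<le> N"
  shows "gapless_lists a N =
     Cons a ` ((if N = a then {[]} else {}) \<union> gapless_lists a (N - a) \<union> gapless_lists (Suc a) (N - a))"
    (is "_ = Cons a ` ?tails")
proof (intro set_eqI iffI)
  fix ys assume "ys \<in> gapless_lists a N"
  then obtain r where "ys = a # r" "gapless (a # r)" "a + sum_list r = N"
    by (auto simp: gapless_lists_def neq_Nil_conv)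
  then show "ys \<in> Cons a ` ?tails"
    by (cases r) (auto simp: gapless_lists_def)
qed (use assms in \<open>auto simp: gapless_lists_def successively_Cons split: if_splits\<close>)

lemma card_gapless_lists_Cons:
  assumes "0 < a" "a \<le> N"
  shows "card (gapless_lists a N) =
    (if N = a then 1 else 0) + card (gapless_lists a (N - a)) + card (gapless_lists (Suc a) (N - a))"
proof -
  let ?Z = "(if N = a then {[]} else {}) :: nat list set"
  let ?A = "gapless_lists a (N - a)" and ?B = "gapless_lists (Suc a) (N - a)"
  have fin: "finite ?A" "finite ?B"
    using assms(1) by (simp_all add: finite_gapless_lists)
  have "card (gapless_lists a N) = card (?Z \<union> (?A \<union> ?B))"
    unfolding gapless_lists_Cons[OF assms(2)] by (simp add: card_image Un_assoc)
  also have "\<dots> = card ?Z + card (?A \<union> ?B)"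
    by (rule card_Un_disjoint) (use fin in \<open>auto simp: gapless_lists_def\<close>)
  also have "card (?A \<union> ?B) = card ?A + card ?B"
    by (rule card_Un_disjoint) (use fin in \<open>auto simp: gapless_lists_def\<close>)
  finally show ?thesis
    by simp
qed

definition gapless_lists_rep_last :: "nat \<Rightarrow> nat \<Rightarrow> nat list set" where
  "gapless_lists_rep_last a N = {ys \<in> gapless_lists a N. \<exists>ws x. ys = ws @ [x, x]}"

lemma gapless_lists_snoc_cases:
  "gapless_lists a (Suc N) =
     (if Suc N = a then {[a]} else {}) \<union> gapless_lists_rep_last a (Suc N) \<union>
     (\<lambda>ys. butlast ys @ [Suc (last ys)]) ` gapless_lists_rep_last a N"
    (is "_ = ?single \<union> _ \<union> ?bump ` _")
proof (intro set_eqI iffI)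
  fix ys assume ys: "ys \<in> gapless_lists a (Suc N)"
  show "ys \<in> ?single \<union> gapless_lists_rep_last a (Suc N) \<union> ?bump ` gapless_lists_rep_last a N"
  proof (cases "length ys < 2")
    case True
    moreover have "ys \<noteq> []" using ys by (simp add: gapless_lists_def)
    ultimately obtain z where "ys = [z]" by (cases ys) auto
    with ys show ?thesis by (simp add: gapless_lists_def)
  next
    case False
    then obtain vs y where "ys = vs @ [y]"
      by (cases ys rule: rev_cases) auto
    moreover with False obtain ws x where "vs = ws @ [x]"
      by (cases vs rule: rev_cases) auto
    ultimately have ys_eq: "ys = ws @ [x, y]"
      by simp
    with ys have "y = x \<or> y = Suc x"
      by (simp add: gapless_lists_def gapless_append_pair)
    then show ?thesis
    proof
      assume "y = x"
      with ys ys_eq show ?thesis by (auto simp: gapless_lists_rep_last_def)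
    next
      assume "y = Suc x"
      with ys ys_eq have "ws @ [x, x] \<in> gapless_lists a N"
        by (simp add: gapless_lists_def gapless_append_pair hd_append split: if_splits)
      then have "ws @ [x, x] \<in> gapless_lists_rep_last a N"
        by (auto simp: gapless_lists_rep_last_def)
      moreover have "ys = ?bump (ws @ [x, x])"
        using ys_eq \<open>y = Suc x\<close> by (simp add: butlast_append)
      ultimately show ?thesis by blast
    qed
  qed
next
  fix ys assume "ys \<in> ?single \<union> gapless_lists_rep_last a (Suc N) \<union> ?bump ` gapless_lists_rep_last a N"
  then show "ys \<in> gapless_lists a (Suc N)"
  proof (elim UnE imageE)
    fix zs assume "ys = ?bump zs" "zs \<in> gapless_lists_rep_last a N"
    then obtain ws x where "ys = ws @ [x, Suc x]" "ws @ [x, x] \<in> gapless_lists a N"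
      by (auto simp: gapless_lists_rep_last_def butlast_append)
    then show ?thesis
      by (simp add: gapless_lists_def gapless_append_pair hd_append split: if_splits)
  qed (simp_all add: gapless_lists_rep_last_def gapless_lists_def split: if_splits)
qed

lemma card_gapless_lists_snoc:
  assumes "0 < a"
  shows "card (gapless_lists a (Suc N)) =
    (if Suc N = a then 1 else 0) + card (gapless_lists_rep_last a (Suc N)) + card (gapless_lists_rep_last a N)"
proof -
  let ?single = "if Suc N = a then {[a]} else {}"
  let ?bump = "\<lambda>ys. butlast ys @ [Suc (last ys)]"
  have fin: "finite (gapless_lists_rep_last a M)" for M
    using finite_gapless_lists[OF assms] by (simp add: gapless_lists_rep_last_def)
  have inj: "inj_on ?bump (gapless_lists_rep_last a N)"
    by (rule inj_onI) (auto simp: gapless_lists_rep_last_def butlast_append)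
  have "card (gapless_lists a (Suc N)) =
      card ?single + card (gapless_lists_rep_last a (Suc N) \<union> ?bump ` gapless_lists_rep_last a N)"
    unfolding gapless_lists_snoc_cases[of a N] Un_assoc
    by (rule card_Un_disjoint) (use fin in \<open>auto simp: gapless_lists_rep_last_def butlast_append\<close>)
  also have "card (gapless_lists_rep_last a (Suc N) \<union> ?bump ` gapless_lists_rep_last a N) =
      card (gapless_lists_rep_last a (Suc N)) + card (gapless_lists_rep_last a N)"
    by (subst card_Un_disjoint)
      (use fin card_image[OF inj] in \<open>auto simp: gapless_lists_rep_last_def butlast_append\<close>)
  finally show ?thesis by simp
qed

definition strict_partitions :: "nat \<Rightarrow> nat list set" where
  "strict_partitions n = {xs. sorted_wrt (>) xs \<and> (\<forall>x\<in>set xs. 0 < x) \<and> sum_list xs = n}"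

lemma q_eq_card_strict_partitions: "q (int n) = int (card (strict_partitions n))"
proof -
  have "sorted_wrt (\<ge>) xs \<and> distinct xs \<longleftrightarrow> sorted_wrt (>) xs" for xs :: "nat list"
    by (induction xs) (auto simp: less_le)
  then have "{xs \<in> partitions n. distinct xs} = strict_partitions n"
    by (auto simp: partitions_def strict_partitions_def)
  then show ?thesis by (simp add: q_def)
qed

definition strict_partitions_max :: "nat \<Rightarrow> nat \<Rightarrow> nat list set" where
  "strict_partitions_max n a = {xs \<in> strict_partitions n. xs \<noteq> [] \<and> hd xs = a}"

definition gapless_lists_len :: "nat \<Rightarrow> nat \<Rightarrow> nat list set" where
  "gapless_lists_len n L = {ys \<in> gapless_lists 1 n. length ys = L}"

lemma finite_strict_partitions: "finite (strict_partitions n)"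
  by (rule finite_subset[OF _ finite_pos_lists_sum[of n]]) (auto simp: strict_partitions_def)

lemma finite_strict_partitions_max: "finite (strict_partitions_max n a)"
  using finite_strict_partitions by (simp add: strict_partitions_max_def)

lemma finite_gapless_lists_len: "finite (gapless_lists_len n L)"
  using finite_gapless_lists[of 1] by (simp add: gapless_lists_len_def)

lemma strict_partitions_max_empty:
  assumes "n < a \<or> a = 0"
  shows "strict_partitions_max n a = {}"
proof -
  have "0 < hd xs \<and> hd xs \<le> n" if "xs \<in> strict_partitions n" "xs \<noteq> []" for xs
    using that member_le_sum_list[of "hd xs" xs] by (auto simp: strict_partitions_def)
  with assms show ?thesis
    unfolding strict_partitions_max_def by fastforce
qed

lemma gapless_lists_len_empty: "n < L \<or> L = 0 \<Longrightarrow> gapless_lists_len n L = {}"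
  using gapless_lists_subset_pos[of 1 n] length_le_sum_list_pos
  by (fastforce simp: gapless_lists_len_def gapless_lists_def)

lemma strict_partitions_max_one: "strict_partitions_max n 1 = gapless_lists_len n 1"
proof -
  have "xs \<in> strict_partitions_max n 1 \<longleftrightarrow> xs = [1] \<and> n = 1" for xs
    by (cases xs; cases "tl xs") (auto simp: strict_partitions_max_def strict_partitions_def)
  moreover have "xs \<in> gapless_lists_len n 1 \<longleftrightarrow> xs = [1] \<and> n = 1" for xs
    by (cases xs) (auto simp: gapless_lists_len_def gapless_lists_def)
  ultimately show ?thesis by blast
qed

lemma strict_partitions_max_Suc:
  assumes "0 < a" "Suc a \<le> n"
  shows "strict_partitions_max n (Suc a) =
    (\<lambda>xs. Suc a # tl xs) ` strict_partitions_max (n - 1) a \<union> Cons (Suc a) ` strict_partitions_max (n - Suc a) a"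
    (is "_ = ?raise ` _ \<union> _")
proof (intro set_eqI iffI)
  fix xs assume "xs \<in> strict_partitions_max n (Suc a)"
  then obtain r where xs: "xs = Suc a # r" and r: "sorted_wrt (>) r" "\<forall>y\<in>set r. 0 < y \<and> y < Suc a"
      "sum_list r = n - Suc a"
    by (auto simp: strict_partitions_max_def strict_partitions_def neq_Nil_conv)
  show "xs \<in> ?raise ` strict_partitions_max (n - 1) a \<union> Cons (Suc a) ` strict_partitions_max (n - Suc a) a"
  proof (cases "r \<noteq> [] \<and> hd r = a")
    case True
    with r show ?thesis
      by (auto simp: xs strict_partitions_max_def strict_partitions_def)
  next
    case False
    have "\<forall>y\<in>set r. y < a"
      using False r by (cases r) (auto simp: less_Suc_eq)
    with r assms have "a # r \<in> strict_partitions_max (n - 1) a"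
      by (auto simp: strict_partitions_max_def strict_partitions_def)
    moreover have "xs = ?raise (a # r)"
      by (simp add: xs)
    ultimately show ?thesis
      by blast
  qed
next
  fix xs assume "xs \<in> ?raise ` strict_partitions_max (n - 1) a \<union> Cons (Suc a) ` strict_partitions_max (n - Suc a) a"
  with assms show "xs \<in> strict_partitions_max n (Suc a)"
    by (auto simp: strict_partitions_max_def strict_partitions_def neq_Nil_conv less_Suc_eq)
qed

lemma card_strict_partitions_max_Suc:
  assumes "0 < a" "Suc a \<le> n"
  shows "card (strict_partitions_max n (Suc a)) =
    card (strict_partitions_max (n - 1) a) + card (strict_partitions_max (n - Suc a) a)"
  unfolding strict_partitions_max_Suc[OF assms]
proof (rule card_image_Un_image)
  show "inj_on (\<lambda>xs. Suc a # tl xs) (strict_partitions_max (n - 1) a)"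
    by (rule inj_onI) (auto simp: strict_partitions_max_def intro: list.expand)
  show "(\<lambda>xs. Suc a # tl xs) ` strict_partitions_max (n - 1) a \<inter>
      Cons (Suc a) ` strict_partitions_max (n - Suc a) a = {}"
    by (auto simp: strict_partitions_max_def strict_partitions_def neq_Nil_conv)
qed (simp_all add: finite_strict_partitions_max)

lemma gapless_lists_len_Suc:
  assumes "0 < a" "Suc a \<le> n"
  shows "gapless_lists_len n (Suc a) =
    Cons 1 ` gapless_lists_len (n - 1) a \<union> (\<lambda>zs. 1 # map Suc zs) ` gapless_lists_len (n - Suc a) a"
    (is "_ = _ \<union> ?lift ` _")
proof (intro set_eqI iffI)
  fix ys assume "ys \<in> gapless_lists_len n (Suc a)"
  then obtain r where ys: "ys = 1 # r" and r: "r \<noteq> []" "gapless r" "hd r = 1 \<or> hd r = 2"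
      "length r = a" "sum_list r = n - 1"
    using assms by (auto simp: gapless_lists_len_def gapless_lists_def successively_Cons neq_Nil_conv)
  show "ys \<in> Cons 1 ` gapless_lists_len (n - 1) a \<union> ?lift ` gapless_lists_len (n - Suc a) a"
  proof (cases "hd r = 1")
    case True
    with r show ?thesis
      by (auto simp: ys gapless_lists_len_def gapless_lists_def)
  next
    case False
    with r have "\<forall>y\<in>set r. 2 \<le> y"
      using gapless_hd_le by fastforce
    then obtain zs where zs: "r = map Suc zs"
      by (metis Suc_1 Suc_le_D ex_map_conv)
    with r False have "zs \<in> gapless_lists_len (n - Suc a) a"
      by (auto simp: gapless_lists_len_def gapless_lists_def gapless_map_Suc sum_list_Suc hd_map)
    then show ?thesis
      by (auto simp: ys zs)
  qed
next
  fix ys assume "ys \<in> Cons 1 ` gapless_lists_len (n - 1) a \<union> ?lift ` gapless_lists_len (n - Suc a) a"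
  with assms show "ys \<in> gapless_lists_len n (Suc a)"
    by (auto simp: gapless_lists_len_def gapless_lists_def successively_Cons gapless_map_Suc
        hd_map sum_list_Suc)
qed

lemma card_gapless_lists_len_Suc:
  assumes "0 < a" "Suc a \<le> n"
  shows "card (gapless_lists_len n (Suc a)) =
    card (gapless_lists_len (n - 1) a) + card (gapless_lists_len (n - Suc a) a)"
  unfolding gapless_lists_len_Suc[OF assms]
proof (rule card_image_Un_image)
  show "inj_on (\<lambda>zs. 1 # map Suc zs) (gapless_lists_len (n - Suc a) a)"
    by (rule inj_onI) (simp add: map_injective)
  have hd_one: "ys \<noteq> [] \<and> hd ys = 1" if "ys \<in> gapless_lists_len m a" for ys m
    using that by (simp add: gapless_lists_len_def gapless_lists_def)
  show "Cons 1 ` gapless_lists_len (n - 1) a \<inter> (\<lambda>zs. 1 # map Suc zs) ` gapless_lists_len (n - Suc a) a = {}"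
  proof -
    have False if "u \<in> gapless_lists_len (n - 1) a" "v \<in> gapless_lists_len (n - Suc a) a"
      "u = map Suc v" for u v
      using that hd_one[OF that(1)] hd_one[OF that(2)] by (cases v) auto
    then show ?thesis by auto
  qed
qed (simp_all add: finite_gapless_lists_len)

text \<open>Conjugation, proved by counting: both families satisfy f(n, a + 1) = f(n - 1, a) + f(n - a - 1, a).\<close>

lemma card_strict_partitions_max_eq: "card (strict_partitions_max n a) = card (gapless_lists_len n a)"
proof (induction a arbitrary: n)
  case 0
  then show ?case
    by (simp add: strict_partitions_max_empty gapless_lists_len_empty)
next
  case (Suc b)
  consider "b = 0" | "n < Suc b" | "0 < b" "Suc b \<le> n"
    by linarith
  then show ?case
  proof cases
    case 1
    then show ?thesis
      using strict_partitions_max_one[of n] by simp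
  next
    case 2
    then show ?thesis
      by (simp add: strict_partitions_max_empty gapless_lists_len_empty)
  next
    case 3
    then show ?thesis
      using Suc.IH by (simp add: card_strict_partitions_max_Suc card_gapless_lists_len_Suc)
  qed
qed

lemma card_strict_partitions_sum:
  assumes "0 < n"
  shows "card (strict_partitions n) = (\<Sum>a = 1..n. card (strict_partitions_max n a))"
proof -
  have "card (strict_partitions n) = (\<Sum>a = 1..n. card {xs \<in> strict_partitions n. hd xs = a})"
  proof (rule card_eq_sum_card_fibres)
    show "hd ` strict_partitions n \<subseteq> {1..n}"
    proof
      fix a assume "a \<in> hd ` strict_partitions n"
      then obtain xs where xs: "xs \<in> strict_partitions n" "a = hd xs"
        by blast
      with assms have "hd xs \<in> set xs"
        by (cases xs) (auto simp: strict_partitions_def)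
      with xs show "a \<in> {1..n}"
        using member_le_sum_list[of "hd xs" xs] by (auto simp: strict_partitions_def)
    qed
  qed (simp_all add: finite_strict_partitions)
  also have "\<dots> = (\<Sum>a = 1..n. card (strict_partitions_max n a))"
    using assms by (intro sum.cong refl arg_cong[where f = card])
      (auto simp: strict_partitions_max_def strict_partitions_def)
  finally show ?thesis .
qed

lemma card_gapless_lists_sum: "card (gapless_lists 1 n) = (\<Sum>L = 1..n. card (gapless_lists_len n L))"
  unfolding gapless_lists_len_def
proof (rule card_eq_sum_card_fibres)
  show "length ` gapless_lists 1 n \<subseteq> {1..n}"
  proof
    fix L assume "L \<in> length ` gapless_lists 1 n"
    then obtain ys where ys: "ys \<in> gapless_lists 1 n" "L = length ys"
      by blast
    then have "length ys \<le> n"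
      using gapless_lists_subset_pos[of 1 n] length_le_sum_list_pos by auto
    with ys show "L \<in> {1..n}"
      by (auto simp: gapless_lists_def Suc_le_eq)
  qed
qed (simp_all add: finite_gapless_lists)

lemma card_strict_partitions_eq: "0 < n \<Longrightarrow> card (strict_partitions n) = card (gapless_lists 1 n)"
  unfolding card_strict_partitions_sum card_gapless_lists_sum card_strict_partitions_max_eq ..

lemma q_eq_card_gapless_lists: "0 < n \<Longrightarrow> q (int n) = int (card (gapless_lists 1 n))"
  by (simp add: q_eq_card_strict_partitions card_strict_partitions_eq)

lemma s_eq_gapless_lists_diff:
  "s (int (m + 3)) = int (card (gapless_lists 2 (m + 2))) - int (card (gapless_lists 2 (m + 1)))"
proof -
  have "q (int (m + 3)) = int (card (gapless_lists 1 (m + 2))) + int (card (gapless_lists 2 (m + 2)))"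
    using q_eq_card_gapless_lists[of "m + 3"] card_gapless_lists_Cons[of 1 "m + 3"]
    by (simp add: eval_nat_numeral)
  moreover have "q (int (m + 3) - 1) = int (card (gapless_lists 1 (m + 1))) + int (card (gapless_lists 2 (m + 1)))"
    using q_eq_card_gapless_lists[of "m + 2"] card_gapless_lists_Cons[of 1 "m + 2"]
    by (simp add: eval_nat_numeral algebra_simps)
  moreover have "q (int (m + 3) - 2) = int (card (gapless_lists 1 (m + 1)))"
    using q_eq_card_gapless_lists[of "m + 1"] by (simp add: algebra_simps)
  moreover have "q (int (m + 3) - 1) = int (card (gapless_lists 1 (m + 2)))"
    using q_eq_card_gapless_lists[of "m + 2"] by (simp add: algebra_simps)
  ultimately show ?thesis
    unfolding s_def by linarith
qed

lemma card_gapless_lists_two_small: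
  "card (gapless_lists 2 2) = 1" "card (gapless_lists 2 3) = 0" "card (gapless_lists 2 4) = 1"
  using card_gapless_lists_Cons[of 2 2] card_gapless_lists_Cons[of 2 3] card_gapless_lists_Cons[of 2 4]
  by (simp_all add: gapless_lists_empty)

lemma s_minus_card_rep_last_rec:
  "s (int (m + 6)) - int (card (gapless_lists_rep_last 3 (m + 3))) =
     s (int (m + 4)) - int (card (gapless_lists_rep_last 3 (m + 1))) +
     (if m = 0 then 1 else 0) - (if m = 1 then 1 else 0)"
proof -
  have "s (int (m + 6)) = int (card (gapless_lists 2 (m + 5))) - int (card (gapless_lists 2 (m + 4)))"
    using s_eq_gapless_lists_diff[of "m + 3"] by (simp add: eval_nat_numeral)
  moreover have "s (int (m + 4)) = int (card (gapless_lists 2 (m + 3))) - int (card (gapless_lists 2 (m + 2)))"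
    using s_eq_gapless_lists_diff[of "m + 1"] by (simp add: eval_nat_numeral)
  moreover have "int (card (gapless_lists 2 (m + 5))) =
      int (card (gapless_lists 2 (m + 3))) + int (card (gapless_lists 3 (m + 3)))"
    using card_gapless_lists_Cons[of 2 "m + 5"] by (simp add: eval_nat_numeral)
  moreover have "int (card (gapless_lists 2 (m + 4))) =
      int (card (gapless_lists 2 (m + 2))) + int (card (gapless_lists 3 (m + 2)))"
    using card_gapless_lists_Cons[of 2 "m + 4"] by (simp add: eval_nat_numeral)
  moreover have "int (card (gapless_lists 3 (m + 3))) = (if m = 0 then 1 else 0) +
      int (card (gapless_lists_rep_last 3 (m + 3))) + int (card (gapless_lists_rep_last 3 (m + 2)))"
    using card_gapless_lists_snoc[of 3 "m + 2"] by (simp add: eval_nat_numeral)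
  moreover have "int (card (gapless_lists 3 (m + 2))) = (if m = 1 then 1 else 0) +
      int (card (gapless_lists_rep_last 3 (m + 2))) + int (card (gapless_lists_rep_last 3 (m + 1)))"
    using card_gapless_lists_snoc[of 3 "m + 1"] by (simp add: eval_nat_numeral)
  ultimately show ?thesis
    by linarith
qed

lemma s_minus_card_rep_last:
  "s (int (m + 4)) - int (card (gapless_lists_rep_last 3 (m + 1))) =
     (if m = 0 then -1 else if m = 1 then 1 else 0)"
proof (induction m rule: nat_induct2)
  case 0
  have "s 4 = int (card (gapless_lists 2 3)) - int (card (gapless_lists 2 2))"
    using s_eq_gapless_lists_diff[of 1] by (simp add: eval_nat_numeral)
  then show ?case
    using card_gapless_lists_two_small by (simp add: gapless_lists_rep_last_def gapless_lists_empty)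
next
  case 1
  have "s 5 = int (card (gapless_lists 2 4)) - int (card (gapless_lists 2 3))"
    using s_eq_gapless_lists_diff[of 2] by (simp add: eval_nat_numeral)
  then show ?case
    using card_gapless_lists_two_small by (simp add: gapless_lists_rep_last_def gapless_lists_empty)
next
  case (step m)
  have "s (int (m + 6)) - int (card (gapless_lists_rep_last 3 (m + 3))) = 0"
    using step s_minus_card_rep_last_rec[of m] by auto
  then show ?case
    by (simp add: eval_nat_numeral)
qed

lemma rev_eq_Cons_pair_iff:
  assumes "3 \<le> length xs"
  shows "xs ! 0 = xs ! 1 \<and> xs ! (length xs - 2) = c \<and> xs ! (length xs - 1) = c \<longleftrightarrow>
    (\<exists>ws x. rev xs = c # ws @ [x, x] \<and> hd (ws @ [x, x]) = c)"
proof
  assume "\<exists>ws x. rev xs = c # ws @ [x, x] \<and> hd (ws @ [x, x]) = c"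
  then obtain ws x where "rev xs = c # ws @ [x, x]" "hd (ws @ [x, x]) = c"
    by blast
  moreover from this(1) have "xs = x # x # rev ws @ [c]"
    by (simp add: rev_swap)
  ultimately show "xs ! 0 = xs ! 1 \<and> xs ! (length xs - 2) = c \<and> xs ! (length xs - 1) = c"
    by (cases ws) (auto simp: nth_append)
next
  assume "xs ! 0 = xs ! 1 \<and> xs ! (length xs - 2) = c \<and> xs ! (length xs - 1) = c"
  moreover obtain x y r where "xs = x # y # r" "r \<noteq> []"
    using assms by (auto simp: numeral_3_eq_3 Suc_le_length_iff)
  moreover from this(2) obtain us v where "r = us @ [v]"
    by (cases r rule: rev_cases) auto
  ultimately have "xs = x # x # us @ [c]" "(if us = [] then x else last us) = c"
    by (auto simp: nth_append last_conv_nth)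
  then show "\<exists>ws x. rev xs = c # ws @ [x, x] \<and> hd (ws @ [x, x]) = c"
    by (intro exI[of _ "rev us"] exI[of _ x]) (auto simp: hd_rev split: if_splits)
qed

lemma corollary_partitions_eq_image:
  assumes "3 \<le> n"
  shows "{xs \<in> partitions n.
            length xs \<ge> 3
          \<and> (\<forall>j. j + 1 < length xs \<longrightarrow> xs ! j - xs ! (j + 1) \<in> {0, 1})
          \<and> xs ! 0 = xs ! 1
          \<and> xs ! (length xs - 2) = 3
          \<and> xs ! (length xs - 1) = 3} = rev ` Cons 3 ` gapless_lists_rep_last 3 (n - 3)"
    (is "?T = _")
proof (intro set_eqI iffI)
  fix xs assume "xs \<in> ?T"
  then have part: "xs \<in> partitions n" and len: "3 \<le> length xs"
    and adj: "\<forall>j. j + 1 < length xs \<longrightarrow> xs ! j - xs ! (j + 1) \<in> {0, 1}"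
    and ends: "xs ! 0 = xs ! 1 \<and> xs ! (length xs - 2) = 3 \<and> xs ! (length xs - 1) = 3"
    by simp_all
  obtain ws x where rev_xs: "rev xs = 3 # ws @ [x, x]" and "hd (ws @ [x, x]) = 3"
    using ends rev_eq_Cons_pair_iff[OF len] by blast
  moreover have "gapless (rev xs)"
    using part adj unfolding gapless_rev_iff partitions_def by simp
  moreover have "sum_list (rev xs) = n"
    using part by (simp add: partitions_def)
  ultimately have "ws @ [x, x] \<in> gapless_lists_rep_last 3 (n - 3)"
    by (auto simp: gapless_lists_rep_last_def gapless_lists_def successively_Cons)
  moreover have "xs = rev (3 # ws @ [x, x])"
    using rev_xs by (simp add: rev_swap)
  ultimately show "xs \<in> rev ` Cons 3 ` gapless_lists_rep_last 3 (n - 3)"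
    by blast
next
  fix xs assume "xs \<in> rev ` Cons 3 ` gapless_lists_rep_last 3 (n - 3)"
  then obtain ws x where xs: "xs = rev (3 # ws @ [x, x])"
    and zs: "ws @ [x, x] \<in> gapless_lists 3 (n - 3)"
    by (auto simp: gapless_lists_rep_last_def)
  then have gap: "gapless (rev xs)" and hd3: "hd (ws @ [x, x]) = 3"
    by (auto simp: gapless_lists_def successively_Cons)
  have len: "3 \<le> length xs"
    by (simp add: xs)
  have pos: "0 < y" if "y \<in> set xs" for y
    using gapless_hd_le[OF gap, of y] that by (auto simp: xs)
  have "sum_list xs = 3 + sum_list (ws @ [x, x])"
    by (simp only: xs sum_list_rev sum_list.Cons)
  moreover have "sum_list (ws @ [x, x]) = n - 3"
    using zs by (simp add: gapless_lists_def)
  ultimately have "sum_list xs = n"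
    using assms by linarith
  moreover have "xs ! 0 = xs ! 1 \<and> xs ! (length xs - 2) = 3 \<and> xs ! (length xs - 1) = 3"
    using rev_eq_Cons_pair_iff[OF len] xs hd3 by simp
  moreover have "sorted_wrt (\<ge>) xs \<and> (\<forall>j. j + 1 < length xs \<longrightarrow> xs ! j - xs ! (j + 1) \<in> {0, 1})"
    using gap unfolding gapless_rev_iff .
  ultimately show "xs \<in> ?T"
    using len pos by (simp add: partitions_def)
qed

lemma card_corollary_partitions:
  assumes "3 \<le> n"
  shows "card {xs \<in> partitions n.
            length xs \<ge> 3
          \<and> (\<forall>j. j + 1 < length xs \<longrightarrow> xs ! j - xs ! (j + 1) \<in> {0, 1})
          \<and> xs ! 0 = xs ! 1
          \<and> xs ! (length xs - 2) = 3
          \<and> xs ! (length xs - 1) = 3} = card (gapless_lists_rep_last 3 (n - 3))"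
  unfolding corollary_partitions_eq_image[OF assms] by (simp add: card_image inj_on_def)

theorem corollary1p6:
  fixes n :: nat
  assumes "n \<ge> 6"
  shows "s (int n) = int (card {xs \<in> partitions n.
            length xs \<ge> 3
          \<and> (\<forall>j. j + 1 < length xs \<longrightarrow> xs ! j - xs ! (j + 1) \<in> {0, 1})
          \<and> xs ! 0 = xs ! 1
          \<and> xs ! (length xs - 2) = 3
          \<and> xs ! (length xs - 1) = 3})"
proof -
  obtain m where n: "n = m + 6"
    using assms by (metis add.commute le_Suc_ex)
  have "s (int n) = int (card (gapless_lists_rep_last 3 (n - 3)))"
    using s_minus_card_rep_last[of "m + 2"] by (simp add: n eval_nat_numeral)
  then show ?thesis
    using card_corollary_partitions[of n] assms by simp
qed

end
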